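(* The Betti numbers of monomial ideals in 4 variables are independent of the base field: for any finite set $E$ of exponent vectors in $\mathbb{Z}_{\ge0}^4$ and any $i\ge 0$, the Betti number $\beta_i(S/M)$, where $S=k[x_1,x_2,x_3,x_4]$ and $M$ is the ideal generated by the monomials $x^{e}$, $e\in E$, takes the same value for every field $k$ (in particular it does not depend on the characteristic of $k$).
   Context: $\beta_i(S/M)=\dim_k\operatorname{Tor}_i^S(S/M,k)$. *)

theory Defs
  imports Main "HOL-Library.Numeral_Type" "HOL-Library.Extended_Nat" "HOL-Library.Function_Algebras"
begin

text \<open>Multigraded (fine-graded) encoding of Tor_i^S(S/M,k) for a monomial ideal M in
  S = k[x_v | v :: 'v], computed as the homology of S/M tensored with the Koszul resolution
  of k = S/(x_v). A monomial x^a lies in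
  M = (x^e | e in E) iff some generator x^e divides x^a.\<close>

definition in_monideal :: "('v \<Rightarrow> nat) set \<Rightarrow> ('v \<Rightarrow> nat) \<Rightarrow> bool" where
  "in_monideal E a \<longleftrightarrow> (\<exists>e\<in>E. \<forall>j. e j \<le> a j)"

definition ind_vec :: "'v set \<Rightarrow> 'v \<Rightarrow> nat" where
  "ind_vec F j = (if j \<in> F then 1 else 0)"

text \<open>Basis of the multidegree-b part of (S/M) \<otimes> K_i: the elements
  x^(b - e_F) \<otimes> e_F with |F| = i, e_F \<le> b and x^(b - e_F) not in M.\<close>
definition kbasis :: "('v \<Rightarrow> nat) set \<Rightarrow> ('v \<Rightarrow> nat) \<Rightarrow> nat \<Rightarrow> 'v set set" where
  "kbasis E b i = {F. card F = i \<and> (\<forall>j\<in>F. 1 \<le> b j) \<and>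
                      \<not> in_monideal E (\<lambda>j. b j - ind_vec F j)}"

definition ksign :: "'v::linorder set \<Rightarrow> 'v \<Rightarrow> 'k::field" where
  "ksign F j = (- 1) ^ card {l\<in>F. l < j}"

definition kchains :: "('v \<Rightarrow> nat) set \<Rightarrow> ('v \<Rightarrow> nat) \<Rightarrow> nat \<Rightarrow> ('v set \<Rightarrow> 'k::field) set" where
  "kchains E b i = {c. \<forall>F. F \<notin> kbasis E b i \<longrightarrow> c F = 0}"

text \<open>Koszul differential from degree i+1 to degree i:
  x^(b-e_F) e_F |-> sum_{j in F} sign(j,F) x_j x^(b-e_F) e_(F-{j}), where terms landing in M vanish.\<close>
definition kdiff :: "('v::{finite,linorder} \<Rightarrow> nat) set \<Rightarrow> ('v \<Rightarrow> nat) \<Rightarrow> nat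
                      \<Rightarrow> ('v set \<Rightarrow> 'k::field) \<Rightarrow> ('v set \<Rightarrow> 'k)" where
  "kdiff E b i c = (\<lambda>G. if G \<in> kbasis E b i then
      (\<Sum>j\<in>UNIV - G. if insert j G \<in> kbasis E b (Suc i)
                       then ksign (insert j G) j * c (insert j G) else 0)
      else 0)"

definition kcycles :: "('v::{finite,linorder} \<Rightarrow> nat) set \<Rightarrow> ('v \<Rightarrow> nat) \<Rightarrow> nat \<Rightarrow> ('v set \<Rightarrow> 'k::field) set" where
  "kcycles E b i = {c \<in> kchains E b i. 0 < i \<longrightarrow> kdiff E b (i - 1) c = (\<lambda>_. 0)}"

definition kboundaries :: "('v::{finite,linorder} \<Rightarrow> nat) set \<Rightarrow> ('v \<Rightarrow> nat) \<Rightarrow> nat \<Rightarrow> ('v set \<Rightarrow> 'k::field) set" where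
  "kboundaries E b i = kdiff E b i ` kchains E b (Suc i)"

definition kdim :: "('a \<Rightarrow> 'k::field) set \<Rightarrow> nat" where
  "kdim V = vector_space.dim (\<lambda>(r::'k) f x. r * f x) V"

definition tor_dim_deg :: "'k::field itself \<Rightarrow> ('v::{finite,linorder} \<Rightarrow> nat) set \<Rightarrow> nat \<Rightarrow> ('v \<Rightarrow> nat) \<Rightarrow> nat" where
  "tor_dim_deg _ E i b = kdim (kcycles E b i :: ('v set \<Rightarrow> 'k) set) - kdim (kboundaries E b i :: ('v set \<Rightarrow> 'k) set)"

text \<open>beta_i(S/M) = dim_k Tor_i^S(S/M,k) = sum over all multidegrees (possibly infinite a priori, hence enat).\<close>
definition betti :: "'k::field itself \<Rightarrow> ('v::{finite,linorder} \<Rightarrow> nat) set \<Rightarrow> nat \<Rightarrow> enat" where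
  "betti K E i = (SUP B\<in>{B. finite B}. \<Sum>b\<in>B. enat (tor_dim_deg K E i b))"

end

(*
  In multidegree b, Tor_i^S(S/M,k) is the homology of a complex whose differentials are
  submatrices of the Koszul differentials on the variables: rows and columns are restricted to
  the basis sets kbasis E b i. Its dimension is therefore determined by the ranks of these
  submatrices. For four variables there are only finitely many of them, and a direct computation
  shows that Gaussian elimination on each one only meets pivots 1 or -1. Such an elimination
  runs identically over every field, so all ranks, and hence all Betti numbers, are independent
  of the field.
*)
theory Submission
  imports Defs "HOL-Library.Indicator_Function"
begin

context vector_space
begin

lemma span_insert_shear:
  assumes "\<And>w. w \<in> S \<Longrightarrow> f w - w \<in> span {v}"
  shows "span (insert v (f ` S)) = span (insert v S)"
proof -
  have sv: "span {v} \<subseteq> span (insert v T)" for T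
    by (intro span_mono) auto
  have "f w \<in> span (insert v S)" if "w \<in> S" for w
    using span_add[OF span_base[of w "insert v S"] subsetD[OF sv assms[OF that]]] that by simp
  moreover have "w \<in> span (insert v (f ` S))" if "w \<in> S" for w
    using span_diff[OF span_base[of "f w" "insert v (f ` S)"] subsetD[OF sv assms[OF that]]] that by simp
  ultimately show ?thesis
    unfolding span_eq by (auto intro: span_base)
qed

end

context finite_dimensional_vector_space
begin

lemma span_Int_span_diff:
  assumes "independent B" "K \<subseteq> B"
  shows "span K \<inter> span (B - K) = {0}"
proof -
  have fin: "finite B" using finiteI_independent[OF assms(1)] .
  have indK: "independent K" and indR: "independent (B - K)"
    using independent_mono[OF assms(1)] assms(2) by auto
  have "{x + y |x y. x \<in> span K \<and> y \<in> span (B - K)} = span B"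
    using span_Un[of K "B - K"] assms(2) by (simp add: Un_absorb1)
  then have "dim (span B) + dim (span K \<inter> span (B - K)) = dim (span K) + dim (span (B - K))"
    using dim_sums_Int[OF subspace_span subspace_span, of K "B - K"] by simp
  moreover have "card B = card K + card (B - K)"
    using card_Diff_subset[OF finite_subset[OF assms(2) fin] assms(2)] card_mono[OF fin assms(2)] by simp
  ultimately have "dim (span K \<inter> span (B - K)) = 0"
    by (simp add: dim_eq_card_independent assms(1) indK indR)
  then show ?thesis using span_zero by auto
qed

end

context finite_dimensional_vector_space_pair_1
begin

lemma rank_nullity:
  assumes f: "Vector_Spaces.linear s1 s2 f" and S: "vs1.subspace S"
  shows "vs1.dim {x \<in> S. f x = 0} + vs2.dim (f ` S) = vs1.dim S"
proof -
  let ?N = "{x \<in> S. f x = 0}"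
  obtain K where K: "K \<subseteq> ?N" "vs1.independent K" "?N \<subseteq> vs1.span K" "card K = vs1.dim ?N"
    using vs1.basis_exists by blast
  obtain B where B: "K \<subseteq> B" "B \<subseteq> S" "vs1.independent B" "S \<subseteq> vs1.span B"
    using vs1.maximal_independent_subset_extend[of K S] K by auto
  define R where "R = B - K"
  have spanB: "vs1.span B = S"
    using B vs1.span_minimal[OF B(2) S] by auto
  have "inj_on f (vs1.span R)"
    unfolding linear_inj_on_iff_eq_0[OF f vs1.subspace_span]
  proof (intro ballI impI)
    fix x assume x: "x \<in> vs1.span R" "f x = 0"
    then have "x \<in> S" using vs1.span_mono[of R B] spanB by (auto simp: R_def)
    with x K(3) have "x \<in> vs1.span K" by auto
    with x(1) show "x = 0" using vs1.span_Int_span_diff[OF B(3,1)] by (auto simp: R_def)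
  qed
  then have dimR: "vs2.dim (f ` R) = card R"
    using dim_image_eq[OF f] vs1.dim_eq_card_independent vs1.independent_mono[OF B(3)]
    by (simp add: R_def)
  have "f ` B \<subseteq> vs2.span (f ` R)"
  proof
    fix y assume "y \<in> f ` B"
    then obtain x where "x \<in> B" "y = f x" by auto
    then show "y \<in> vs2.span (f ` R)"
      using K(1) vs2.span_zero by (cases "x \<in> K") (auto simp: R_def intro: vs2.span_base)
  qed
  then have "f ` S \<subseteq> vs2.span (f ` R)"
    using linear_span_image[OF f, of B] spanB vs2.span_minimal[OF _ vs2.subspace_span] by blast
  moreover have "f ` R \<subseteq> vs2.span (f ` S)"
    using B(2) by (auto simp: R_def intro: vs2.span_base)
  ultimately have "vs2.span (f ` S) = vs2.span (f ` R)"
    by (simp add: vs2.span_eq)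
  then have "vs2.dim (f ` S) = card R"
    using vs2.span_eq_dim dimR by metis
  moreover have "card B = card K + card R"
    using vs1.finiteI_independent[OF B(3)] B(1)
    by (simp add: R_def card_Diff_subset finite_subset card_mono)
  ultimately show ?thesis
    using K(4) vs1.dim_unique[OF B(2,4,3) refl] by simp
qed

end

lemma sum_fun_apply: "(\<Sum>i\<in>A. f i) x = (\<Sum>i\<in>A. f i x)"
  by (induct A rule: infinite_finite_induct) auto

interpretation fun_space: vector_space "\<lambda>(r::'k::field) (f::'a \<Rightarrow> 'k) x. r * f x"
  by unfold_locales (auto simp: fun_eq_iff algebra_simps)

lemma fun_space_span_indicators:
  assumes "finite B"
  shows "fun_space.span ((\<lambda>a. indicator {a}) ` B) = {c :: 'a \<Rightarrow> 'k::field. \<forall>x. x \<notin> B \<longrightarrow> c x = 0}"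
proof
  show "fun_space.span ((\<lambda>a. indicator {a}) ` B) \<subseteq> {c :: 'a \<Rightarrow> 'k. \<forall>x. x \<notin> B \<longrightarrow> c x = 0}"
    by (rule fun_space.span_minimal) (auto simp: fun_space.subspace_def indicator_def)
  show "{c :: 'a \<Rightarrow> 'k. \<forall>x. x \<notin> B \<longrightarrow> c x = 0} \<subseteq> fun_space.span ((\<lambda>a. indicator {a}) ` B)"
  proof
    fix c :: "'a \<Rightarrow> 'k" assume "c \<in> {c. \<forall>x. x \<notin> B \<longrightarrow> c x = 0}"
    then have "c = (\<Sum>a\<in>B. (\<lambda>x. c a * indicator {a} x))"
      using assms by (auto simp: fun_eq_iff sum_fun_apply indicator_def Int_insert_right)
    also have "\<dots> \<in> fun_space.span ((\<lambda>a. indicator {a}) ` B)"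
      by (intro fun_space.span_sum fun_space.span_scale fun_space.span_base) auto
    finally show "c \<in> fun_space.span ((\<lambda>a. indicator {a}) ` B)" .
  qed
qed

lemma fun_space_independent_indicators:
  "fun_space.independent (range (\<lambda>a. indicator {a}) :: ('a::finite \<Rightarrow> 'k::field) set)"
proof (rule fun_space.independent_if_scalars_zero)
  fix u :: "('a \<Rightarrow> 'k) \<Rightarrow> 'k" and v :: "'a \<Rightarrow> 'k"
  assume sum0: "(\<Sum>w\<in>range (\<lambda>a. indicator {a}). (\<lambda>x. u w * w x)) = 0"
    and "v \<in> range (\<lambda>a. indicator {a})"
  then obtain a :: 'a where a: "v = indicator {a}" by auto
  have inj: "inj (\<lambda>a. indicator {a} :: 'a \<Rightarrow> 'k)"
    by (auto simp: inj_def fun_eq_iff indicator_def split: if_splits)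
  have "0 = (\<Sum>w\<in>range (\<lambda>a. indicator {a}). (\<lambda>x. u w * w x)) a"
    using sum0 by simp
  also have "\<dots> = (\<Sum>b\<in>UNIV. u (indicator {b}) * indicator {b} a)"
    by (simp add: sum_fun_apply sum.reindex[OF inj])
  also have "\<dots> = u v"
    by (simp add: a indicator_def)
  finally show "u v = 0" ..
qed simp

interpretation fin_fun_space: finite_dimensional_vector_space "\<lambda>(r::'k::field) (f::'a::finite \<Rightarrow> 'k) x. r * f x"
  "range (\<lambda>a. indicator {a})"
  by unfold_locales
    (simp_all add: fun_space_independent_indicators fun_space_span_indicators[of UNIV, simplified])

interpretation fun_space_pair: finite_dimensional_vector_space_pair_1
  "\<lambda>(r::'k::field) (f::'a::finite \<Rightarrow> 'k) x. r * f x" "range (\<lambda>a. indicator {a})"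
  "\<lambda>(r::'k::field) (f::'b \<Rightarrow> 'k) x. r * f x"
  by unfold_locales

lemma fun_space_dim_supported:
  assumes "finite B"
  shows "fun_space.dim {c :: 'a::finite \<Rightarrow> 'k::field. \<forall>x. x \<notin> B \<longrightarrow> c x = 0} = card B"
proof -
  have "inj_on (\<lambda>a. indicator {a} :: 'a \<Rightarrow> 'k) B"
    by (auto simp: inj_on_def fun_eq_iff indicator_def split: if_splits)
  moreover have "fun_space.independent ((\<lambda>a. indicator {a} :: 'a \<Rightarrow> 'k) ` B)"
    by (rule fun_space.independent_mono[OF fun_space_independent_indicators]) auto
  ultimately show ?thesis
    unfolding fun_space_span_indicators[OF assms, symmetric]
    by (simp add: fun_space.dim_eq_card_independent card_image)
qed

lemma fun_space_span_vanishing: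
  assumes "\<And>f. f \<in> S \<Longrightarrow> f r = 0" and "f \<in> fun_space.span S"
  shows "f r = (0::'k::field)"
proof -
  have "fun_space.span S \<subseteq> {f :: 'a \<Rightarrow> 'k. f r = 0}"
    using assms(1) by (intro fun_space.span_minimal) (auto simp: fun_space.subspace_def)
  then show ?thesis using assms(2) by auto
qed

lemma fun_space_dim_insert_pivot:
  fixes v :: "'a::finite \<Rightarrow> 'k::field"
  assumes unit: "v r * v r = 1"
  shows "fun_space.dim (insert v S) = Suc (fun_space.dim ((\<lambda>w x. w x - w r * v r * v x) ` S))"
proof -
  let ?g = "\<lambda>w x. w x - w r * v r * v x"
  have "?g w - w \<in> fun_space.span {v}" for w
  proof -
    have "?g w - w = (\<lambda>x. - (w r * v r) * v x)"
      by (simp add: fun_eq_iff)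
    moreover have "(\<lambda>x. - (w r * v r) * v x) \<in> fun_space.span {v}"
      by (intro fun_space.span_scale fun_space.span_base) simp
    ultimately show ?thesis by (simp only:)
  qed
  then have "fun_space.span (insert v (?g ` S)) = fun_space.span (insert v S)"
    by (rule fun_space.span_insert_shear)
  then have "fun_space.dim (insert v S) = fun_space.dim (insert v (?g ` S))"
    by (rule fun_space.span_eq_dim[symmetric])
  moreover have "v \<notin> fun_space.span (?g ` S)"
  proof
    assume "v \<in> fun_space.span (?g ` S)"
    moreover have "\<And>f. f \<in> ?g ` S \<Longrightarrow> f r = 0"
      using unit by (auto simp: mult.assoc)
    ultimately have "v r = 0"
      by (rule fun_space_span_vanishing[rotated])
    with unit show False by simp
  qed
  ultimately show ?thesis
    by (simp add: fin_fun_space.dim_insert)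
qed

(* Gaussian elimination over the integers that gives up at the first pivot other than 1 or -1.
   Eliminating with a unit pivot needs no division, so a successful run is also a valid
   elimination over every field. *)
fun unit_pivot_rank :: "int list list \<Rightarrow> nat option" where
  "unit_pivot_rank [] = Some 0"
| "unit_pivot_rank (v # vs) =
    (case find (\<lambda>k. v ! k \<noteq> 0) [0..<length v] of
      None \<Rightarrow> unit_pivot_rank vs
    | Some k \<Rightarrow>
        if \<bar>v ! k\<bar> = 1
        then map_option Suc (unit_pivot_rank (map (\<lambda>w. map2 (\<lambda>a b. a - w ! k * v ! k * b) w v) vs))
        else None)"

lemma unit_pivot_rank_dim:
  fixes rows :: "'r::finite list" and vs :: "('r \<Rightarrow> int) list"
  assumes "unit_pivot_rank (map (\<lambda>v. map v rows) vs) = Some n"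
    and "\<And>v x. v \<in> set vs \<Longrightarrow> v x \<noteq> 0 \<Longrightarrow> x \<in> set rows"
  shows "fun_space.dim ((\<lambda>v x. of_int (v x) :: 'k::field) ` set vs) = n"
  using assms
proof (induction "map (\<lambda>v. map v rows) vs" arbitrary: vs n rule: unit_pivot_rank.induct)
  case 1
  then show ?case by simp
next
  case (2 v' vs')
  let ?o = "\<lambda>v x. of_int (v x) :: 'k"
  obtain v ws where vs: "vs = v # ws" and v': "v' = map v rows" and vs': "vs' = map (\<lambda>v. map v rows) ws"
    using "2.hyps"(3) by (cases vs) auto
  show ?case
  proof (cases "find (\<lambda>k. v' ! k \<noteq> 0) [0..<length v']")
    case None
    then have "v x = 0" for x
      using "2.prems"(2)[of v x] by (auto simp: vs v' find_None_iff in_set_conv_nth)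
    then have "?o v = 0"
      by (simp add: fun_eq_iff)
    moreover have "fun_space.dim (?o ` set ws) = n"
      using "2.hyps"(1)[OF None vs'] "2.prems" None by (auto simp: vs v' vs')
    ultimately show ?thesis
      by (simp add: vs fin_fun_space.dim_insert fun_space.span_zero)
  next
    case (Some k)
    let ?r = "rows ! k"
    have k: "k < length rows"
      using Some by (auto simp: v' find_Some_iff)
    have unit: "\<bar>v ?r\<bar> = 1"
      using "2.prems"(1) Some k by (auto simp: vs v' split: if_splits)
    define ws' where "ws' = map (\<lambda>w x. w x - w ?r * v ?r * v x) ws"
    have reduce: "map (\<lambda>w. map2 (\<lambda>a b. a - w ! k * v' ! k * b) w v') vs' = map (\<lambda>v. map v rows) ws'"
      using k by (simp add: v' vs' ws'_def zip_map_map zip_same_conv_map)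
    have "unit_pivot_rank (v' # vs') = map_option Suc (unit_pivot_rank (map (\<lambda>v. map v rows) ws'))"
      using Some unit k by (simp add: reduce[symmetric] v')
    moreover have "unit_pivot_rank (v' # vs') = Some n"
      using "2.prems"(1) by (simp only: "2.hyps"(3))
    ultimately have "map_option Suc (unit_pivot_rank (map (\<lambda>v. map v rows) ws')) = Some n"
      by simp
    then obtain m where m: "unit_pivot_rank (map (\<lambda>v. map v rows) ws') = Some m" and n: "n = Suc m"
      by auto
    have "x \<in> set rows" if w: "w \<in> set ws'" and wx: "w x \<noteq> 0" for w x
    proof -
      obtain u where "u \<in> set ws" "w = (\<lambda>x. u x - u ?r * v ?r * v x)"
        using w unfolding ws'_def set_map by blast
      then show ?thesis
        using wx "2.prems"(2)[of u x] "2.prems"(2)[of v x] by (cases "v x = 0") (auto simp: vs)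
    qed
    with unit k have dim_ws': "fun_space.dim (?o ` set ws') = m"
      by (intro "2.hyps"(2)[OF Some _ reduce m]) (auto simp: v')
    have "?o v ?r * ?o v ?r = 1"
      using unit abs_mult_self_eq[of "v ?r"] by (simp flip: of_int_mult)
    then have "fun_space.dim (insert (?o v) (?o ` set ws))
        = Suc (fun_space.dim ((\<lambda>w x. w x - w ?r * ?o v ?r * ?o v x) ` ?o ` set ws))"
      by (rule fun_space_dim_insert_pivot)
    also have "(\<lambda>w x. w x - w ?r * ?o v ?r * ?o v x) ` ?o ` set ws = ?o ` set ws'"
      by (auto simp: ws'_def image_image)
    finally show ?thesis
      using dim_ws' n by (simp add: vs)
  qed
qed

lemma card_Suc_superset_eq_insert:
  assumes "G \<subseteq> F" "card F = Suc (card G)"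
  obtains j where "j \<notin> G" "F = insert j G"
proof -
  have "finite F"
    using assms(2) card.infinite by fastforce
  then have "card (F - G) = 1"
    using assms card_Diff_subset[of G F] finite_subset by auto
  then obtain j where "F - G = {j}"
    by (rule card_1_singletonE)
  with assms(1) show ?thesis
    using that by blast
qed

(* Entry in row G and column F of the Koszul differential e_F |-> sum_j sign(j, F) e_(F - {j}),
   with the rows restricted to R; the_elem (F - G) is the index j removed from F. *)
definition koszul_coeff :: "'v::linorder set set \<Rightarrow> 'v set \<Rightarrow> 'v set \<Rightarrow> int" where
  "koszul_coeff R F G =
    (if G \<in> R \<and> G \<subseteq> F \<and> card F = Suc (card G) then (-1) ^ card {l \<in> F. l < the_elem (F - G)} else 0)"

lemma koszul_coeff_nonzero_imp:
  assumes "koszul_coeff R F G \<noteq> 0"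
  obtains j where "j \<notin> G" "F = insert j G"
proof -
  have "G \<subseteq> F" "card F = Suc (card G)"
    using assms by (auto simp: koszul_coeff_def split: if_splits)
  then show ?thesis
    using that by (rule card_Suc_superset_eq_insert)
qed

lemma koszul_coeff_insert:
  assumes "finite G" "j \<notin> G"
  shows "koszul_coeff R (insert j G) G = (if G \<in> R then (-1) ^ card {l \<in> insert j G. l < j} else 0)"
proof -
  have "insert j G - G = {j}" using assms(2) by auto
  then show ?thesis using assms by (auto simp: koszul_coeff_def)
qed

lemma koszul_coeff_image:
  fixes \<phi> :: "'v::linorder \<Rightarrow> 'w::linorder"
  assumes mono: "\<And>x y. \<phi> x < \<phi> y \<longleftrightarrow> x < y"
  shows "koszul_coeff ((`) \<phi> ` R) (\<phi> ` F) (\<phi> ` G) = koszul_coeff R F G"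
proof -
  have inj: "inj \<phi>"
    by (rule injI) (metis mono less_irrefl linorder_neqE)
  then have card_img: "card (\<phi> ` A) = card A" for A
    by (simp add: card_image inj_on_subset)
  have mem: "\<phi> ` G \<in> (`) \<phi> ` R \<longleftrightarrow> G \<in> R"
    using inj by (simp add: inj_image_mem_iff inj_on_image)
  show ?thesis
  proof (cases "G \<in> R \<and> G \<subseteq> F \<and> card F = Suc (card G)")
    case False
    then show ?thesis
      using inj by (auto simp: koszul_coeff_def mem card_img inj_image_subset_iff)
  next
    case True
    then obtain j where j: "j \<notin> G" "F = insert j G"
      using card_Suc_superset_eq_insert by blast
    then have "F - G = {j}" "\<phi> ` F - \<phi> ` G = {\<phi> j}"
      using inj by (auto simp: inj_eq)
    moreover have "{l \<in> \<phi> ` F. l < \<phi> j} = \<phi> ` {l \<in> F. l < j}"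
      using mono by auto
    ultimately show ?thesis
      using True by (simp add: koszul_coeff_def mem card_img inj_image_subset_iff[OF inj])
  qed
qed

definition order_index :: "'a::{finite,linorder} \<Rightarrow> nat" where
  "order_index x = card {y. y < x}"

lemma order_index_less_iff: "order_index x < order_index y \<longleftrightarrow> x < y"
proof
  assume "x < y"
  then have "{z. z < x} \<subset> {z. z < y}"
    by auto
  then show "order_index x < order_index y"
    unfolding order_index_def by (rule psubset_card_mono[OF finite])
next
  assume "order_index x < order_index y"
  moreover have "order_index y \<le> order_index x" if "y \<le> x"
    unfolding order_index_def using that by (intro card_mono) auto
  ultimately show "x < y" by fastforce
qed

lemma inj_order_index: "inj order_index"
  by (rule injI) (metis order_index_less_iff less_irrefl linorder_neqE)

lemma range_order_index: "range (order_index :: 'a::{finite,linorder} \<Rightarrow> nat) = {..<CARD('a)}"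
proof (rule card_subset_eq)
  show "range (order_index :: 'a \<Rightarrow> nat) \<subseteq> {..<CARD('a)}"
    unfolding order_index_def by (auto intro!: psubset_card_mono)
  show "card (range (order_index :: 'a \<Rightarrow> nat)) = card {..<CARD('a)}"
    by (simp add: card_image inj_order_index)
qed simp

definition subsets_of_card :: "nat \<Rightarrow> nat \<Rightarrow> nat set list" where
  "subsets_of_card n i = filter (\<lambda>s. card s = i) (map set (subseqs [0..<n]))"

lemma set_subsets_of_card: "set (subsets_of_card n i) = {s. s \<subseteq> {..<n} \<and> card s = i}"
  by (auto simp: subsets_of_card_def subseqs_powset atLeast0LessThan)

definition koszul_unit_pivots :: "nat \<Rightarrow> nat \<Rightarrow> bool" where
  "koszul_unit_pivots n i \<longleftrightarrow>
    list_all (\<lambda>rs. list_all (\<lambda>cs.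
        unit_pivot_rank (map (\<lambda>F. map (koszul_coeff (set rs) F) (subsets_of_card n i)) cs) \<noteq> None)
      (subseqs (subsets_of_card n (Suc i))))
    (subseqs (subsets_of_card n i))"

lemma koszul_unit_pivots_4: "koszul_unit_pivots 4 i"
proof -
  consider "i = 0" | "i = 1" | "i = 2" | "i = 3" | "i \<ge> 4" by linarith
  then show ?thesis
  proof cases
    case 5
    then have "set (subsets_of_card 4 (Suc i)) = {}"
      by (auto simp: set_subsets_of_card dest!: card_mono[OF finite_lessThan])
    then show ?thesis
      by (simp add: koszul_unit_pivots_def list_all_iff)
  qed (simp_all only:, code_simp+)
qed

lemma koszul_unit_pivot_rank_4:
  fixes R :: "nat set set"
  assumes "C \<subseteq> set (subsets_of_card 4 (Suc i))"
  obtains cs n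
  where "set cs = C" and "unit_pivot_rank (map (\<lambda>F. map (koszul_coeff R F) (subsets_of_card 4 i)) cs) = Some n"
proof -
  let ?rows = "subsets_of_card 4 i"
  have "R \<inter> set ?rows \<in> set ` set (subseqs ?rows)"
    by (rule subset_subseqs) simp
  then obtain rs where rs: "rs \<in> set (subseqs ?rows)" "R \<inter> set ?rows = set rs"
    by (rule imageE)
  from assms have "C \<in> set ` set (subseqs (subsets_of_card 4 (Suc i)))"
    by (rule subset_subseqs)
  then obtain cs where cs: "cs \<in> set (subseqs (subsets_of_card 4 (Suc i)))" "C = set cs"
    by (rule imageE)
  have "map (\<lambda>F. map (koszul_coeff R F) ?rows) cs = map (\<lambda>F. map (koszul_coeff (set rs) F) ?rows) cs"
    using rs(2) by (auto simp: koszul_coeff_def)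
  moreover have "unit_pivot_rank (map (\<lambda>F. map (koszul_coeff (set rs) F) ?rows) cs) \<noteq> None"
    using koszul_unit_pivots_4[of i] rs(1) cs(1) unfolding koszul_unit_pivots_def list_all_iff by blast
  ultimately obtain n where "unit_pivot_rank (map (\<lambda>F. map (koszul_coeff R F) ?rows) cs) = Some n"
    by auto
  then show ?thesis
    by (rule that[OF cs(2)[symmetric]])
qed

lemma koszul_columns_unit_pivot_rank:
  fixes R C :: "'v::{finite,linorder} set set"
  assumes card: "CARD('v) = 4" and C: "C \<subseteq> {F. card F = Suc i}"
  obtains rows cols n
  where "unit_pivot_rank (map (\<lambda>F. map (koszul_coeff R F) rows) cols) = Some n"
    and "set cols = C"
    and "\<And>F G. F \<in> C \<Longrightarrow> koszul_coeff R F G \<noteq> 0 \<Longrightarrow> G \<in> set rows"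
proof -
  let ?\<psi> = "image (order_index :: 'v \<Rightarrow> nat)"
  let ?rows = "subsets_of_card 4 i"
  have inj_\<psi>: "inj ?\<psi>"
    using inj_order_index[where 'a='v] by (simp add: inj_on_image)
  have range: "range (order_index :: 'v \<Rightarrow> nat) = {..<4}"
    using range_order_index[where 'a='v] card by simp
  have \<psi>_card: "card (?\<psi> A) = card A" for A
    using inj_order_index[where 'a='v] by (simp add: card_image inj_on_subset)
  have \<psi>_sub: "?\<psi> A \<subseteq> {..<4}" for A
    using image_mono[of A UNIV order_index] range by simp
  have \<psi>_onto: "\<exists>A. s = ?\<psi> A" if "s \<subseteq> {..<4}" for s
    using that range by (intro exI[of _ "order_index -` s"]) (simp add: image_vimage_eq Int_absorb2)
  have "?\<psi> ` C \<subseteq> set (subsets_of_card 4 (Suc i))"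
    using C \<psi>_sub by (auto simp: set_subsets_of_card \<psi>_card)
  then obtain cs n where cs: "set cs = ?\<psi> ` C"
    and n: "unit_pivot_rank (map (\<lambda>F. map (koszul_coeff (?\<psi> ` R) F) ?rows) cs) = Some n"
    by (rule koszul_unit_pivot_rank_4)
  have "\<exists>rows. ?rows = map ?\<psi> rows"
    unfolding ex_map_conv using \<psi>_onto by (simp add: set_subsets_of_card)
  then obtain rows where rows: "?rows = map ?\<psi> rows" ..
  have "\<exists>cols. cs = map ?\<psi> cols"
    unfolding ex_map_conv using cs by blast
  then obtain cols where cols: "cs = map ?\<psi> cols" ..
  have matrix: "map (\<lambda>F. map (koszul_coeff R F) rows) cols = map (\<lambda>F. map (koszul_coeff (?\<psi> ` R) F) ?rows) cs"
    by (simp add: rows cols koszul_coeff_image[OF order_index_less_iff])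
  have "?\<psi> ` set cols = ?\<psi> ` C"
    using cs by (simp add: cols)
  then have set_cols: "set cols = C"
    using inj_\<psi> by (simp add: inj_image_eq_iff)
  have supp: "G \<in> set rows" if "F \<in> C" "koszul_coeff R F G \<noteq> 0" for F G
  proof -
    have "card G = i"
      using that C by (auto simp: koszul_coeff_def split: if_splits)
    then have "?\<psi> G \<in> ?\<psi> ` set rows"
      using \<psi>_sub by (simp add: set_subsets_of_card \<psi>_card flip: set_map rows)
    then show ?thesis
      using inj_\<psi> by (simp add: inj_image_mem_iff)
  qed
  show ?thesis
    by (rule that[of rows cols n, OF _ set_cols supp]) (simp add: matrix n)
qed

lemma koszul_columns_dim_field_independent:
  fixes R C :: "'v::{finite,linorder} set set"
  assumes "CARD('v) = 4" and "C \<subseteq> {F. card F = Suc i}"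
  shows "fun_space.dim ((\<lambda>F G. of_int (koszul_coeff R F G) :: 'k::field) ` C)
       = fun_space.dim ((\<lambda>F G. of_int (koszul_coeff R F G) :: 'l::field) ` C)"
proof -
  obtain rows cols n
    where rank: "unit_pivot_rank (map (\<lambda>F. map (koszul_coeff R F) rows) cols) = Some n"
      and cols: "set cols = C"
      and supp: "\<And>F G. F \<in> C \<Longrightarrow> koszul_coeff R F G \<noteq> 0 \<Longrightarrow> G \<in> set rows"
    using koszul_columns_unit_pivot_rank[OF assms, where R=R] by blast
  have rank': "unit_pivot_rank (map (\<lambda>v. map v rows) (map (koszul_coeff R) cols)) = Some n"
    using rank by (simp only: map_map comp_def)
  have supp': "x \<in> set rows" if "v \<in> set (map (koszul_coeff R) cols)" "v x \<noteq> 0" for v x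
    using that supp cols by auto
  show ?thesis
    using unit_pivot_rank_dim[OF rank' supp', where 'k='k] unit_pivot_rank_dim[OF rank' supp', where 'k='l]
    by (simp add: cols image_image)
qed

lemma kdiff_eq_sum_columns:
  fixes c :: "'v::{finite,linorder} set \<Rightarrow> 'k::field"
  assumes c: "c \<in> kchains E b (Suc i)"
  shows "kdiff E b i c = (\<Sum>F\<in>kbasis E b (Suc i). (\<lambda>G. c F * of_int (koszul_coeff (kbasis E b i) F G)))"
proof
  fix G
  let ?B = "kbasis E b i" and ?B' = "kbasis E b (Suc i)"
  let ?t = "\<lambda>F. c F * of_int (koszul_coeff ?B F G)"
  have c0: "c F = 0" if "F \<notin> ?B'" for F
    using c that by (simp add: kchains_def)
  show "kdiff E b i c G = (\<Sum>F\<in>?B'. (\<lambda>G. c F * of_int (koszul_coeff ?B F G))) G"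
  proof (cases "G \<in> ?B")
    case False
    then show ?thesis
      by (simp add: kdiff_def koszul_coeff_def sum_fun_apply)
  next
    case True
    have "kdiff E b i c G = (\<Sum>j\<in>UNIV - G. ?t (insert j G))"
      using True c0 by (auto simp: kdiff_def ksign_def koszul_coeff_insert intro!: sum.cong)
    also have "\<dots> = sum ?t ((\<lambda>j. insert j G) ` (UNIV - G))"
      by (rule sum.reindex[symmetric, unfolded comp_def]) (auto simp: inj_on_def)
    also have "\<dots> = sum ?t UNIV"
    proof (rule sum.mono_neutral_left)
      show "\<forall>F\<in>UNIV - (\<lambda>j. insert j G) ` (UNIV - G). ?t F = 0"
      proof (rule ballI, rule ccontr)
        fix F assume F: "F \<in> UNIV - (\<lambda>j. insert j G) ` (UNIV - G)" and "?t F \<noteq> 0"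
        then have "koszul_coeff ?B F G \<noteq> 0" by auto
        then obtain j where "j \<notin> G" "F = insert j G"
          by (rule koszul_coeff_nonzero_imp)
        with F show False by blast
      qed
    qed auto
    also have "\<dots> = sum ?t ?B'"
      using c0 by (intro sum.mono_neutral_right) auto
    finally show ?thesis
      by (simp add: sum_fun_apply)
  qed
qed

lemma linear_kdiff:
  "Vector_Spaces.linear (\<lambda>r f x. r * f x) (\<lambda>r f x. r * f x) (kdiff E b i :: ('v::{finite,linorder} set \<Rightarrow> 'k::field) \<Rightarrow> _)"
  unfolding Vector_Spaces.linear_iff
  by (auto simp: fun_space.vector_space_axioms kdiff_def fun_eq_iff sum.distrib[symmetric]
      sum_distrib_left distrib_left mult.left_commute intro!: sum.cong)

lemma kchains_eq_span:
  "kchains E b i = fun_space.span ((\<lambda>F. indicator {F}) ` kbasis E b i :: ('v::{finite,linorder} set \<Rightarrow> 'k::field) set)"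
  by (simp add: fun_space_span_indicators kchains_def)

lemma kdim_kchains: "kdim (kchains E b i :: ('v::{finite,linorder} set \<Rightarrow> 'k::field) set) = card (kbasis E b i)"
  unfolding kdim_def kchains_def by (rule fun_space_dim_supported) simp

lemma kboundaries_eq_span:
  "(kboundaries E b i :: ('v::{finite,linorder} set \<Rightarrow> 'k::field) set)
     = fun_space.span ((\<lambda>F G. of_int (koszul_coeff (kbasis E b i) F G)) ` kbasis E b (Suc i))"
proof -
  have "kdiff E b i (indicator {F}) = (\<lambda>G. of_int (koszul_coeff (kbasis E b i) F G) :: 'k)"
    if "F \<in> kbasis E b (Suc i)" for F
    using that by (subst kdiff_eq_sum_columns) (auto simp: kchains_def sum_fun_apply indicator_def)
  then have "kdiff E b i ` (\<lambda>F. indicator {F}) ` kbasis E b (Suc i)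
      = (\<lambda>F G. of_int (koszul_coeff (kbasis E b i) F G) :: 'k) ` kbasis E b (Suc i)"
    by (force simp: image_image)
  then show ?thesis
    unfolding kboundaries_def kchains_eq_span fun_space_pair.linear_span_image[OF linear_kdiff, symmetric]
    by simp
qed

lemma kdim_kcycles_0: "kdim (kcycles E b 0 :: ('v::{finite,linorder} set \<Rightarrow> 'k::field) set) = card (kbasis E b 0)"
  by (simp add: kcycles_def kdim_kchains)

lemma kdim_kcycles_Suc:
  "kdim (kcycles E b (Suc i) :: ('v::{finite,linorder} set \<Rightarrow> 'k::field) set)
     = card (kbasis E b (Suc i)) - kdim (kboundaries E b i :: ('v set \<Rightarrow> 'k) set)"
proof -
  have cycles: "kcycles E b (Suc i) = {c \<in> kchains E b (Suc i). kdiff E b i c = (0 :: 'v set \<Rightarrow> 'k)}"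
    by (auto simp: kcycles_def zero_fun_def)
  have "fun_space.subspace (kchains E b (Suc i) :: ('v set \<Rightarrow> 'k) set)"
    by (simp add: kchains_eq_span fun_space.subspace_span)
  from fun_space_pair.rank_nullity[OF linear_kdiff this]
  have "kdim (kcycles E b (Suc i) :: ('v set \<Rightarrow> 'k) set) + kdim (kboundaries E b i :: ('v set \<Rightarrow> 'k) set)
      = card (kbasis E b (Suc i))"
    by (simp add: cycles kdim_def kboundaries_def kdim_kchains[unfolded kdim_def])
  then show ?thesis by linarith
qed

lemma kdim_kboundaries_field_independent:
  fixes E :: "('v::{finite,linorder} \<Rightarrow> nat) set"
  assumes "CARD('v) = 4"
  shows "kdim (kboundaries E b i :: ('v set \<Rightarrow> 'k::field) set) = kdim (kboundaries E b i :: ('v set \<Rightarrow> 'l::field) set)"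
  unfolding kdim_def kboundaries_eq_span fun_space.dim_span
  by (rule koszul_columns_dim_field_independent[OF assms]) (auto simp: kbasis_def)

lemma tor_dim_deg_field_independent:
  fixes E :: "('v::{finite,linorder} \<Rightarrow> nat) set"
  assumes "CARD('v) = 4"
  shows "tor_dim_deg TYPE('k::field) E i b = tor_dim_deg TYPE('l::field) E i b"
  using kdim_kboundaries_field_independent[OF assms, of E b, where 'k='k and 'l='l]
  by (cases i) (simp_all add: tor_dim_deg_def kdim_kcycles_0 kdim_kcycles_Suc)

theorem theorem10:
  fixes E :: "(4 \<Rightarrow> nat) set" and i :: nat
  assumes "finite E"
  shows "betti TYPE('k::field) E i = betti TYPE('l::field) E i"
proof -
  have "tor_dim_deg TYPE('k) E i = tor_dim_deg TYPE('l) E i"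
    by (intro ext tor_dim_deg_field_independent) simp
  then show ?thesis
    by (simp add: betti_def)
qed

end
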